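(* Let $t\ge 3$ and let $\mathcal{H}$ be an $n$-vertex $3$-uniform hypergraph that does not contain $K_{2,t}$ as a trace. Let $A$ be the set of edges of $\mathcal{H}$ containing at least one pair of vertices whose co-degree in $\mathcal{H}$ is $1$, and let $B=\mathcal{H}\setminus A$. For a vertex $x$, let $N_1(x)=\{z: \exists e\in B,\ \{x,z\}\subseteq e\}$ and $N_2(x)=\{z\notin N_1(x)\cup\{x\}: \exists e\in B,\ z\in e,\ e\cap N_1(x)\neq\emptyset\}$. Fix a vertex $v$, and for $u\in N_1(v)$ let $E_u=\{e\in B: e\cap N_1(v)=\{u\}\}$ and $V_u=\{w\in N_2(v): \exists e\in E_u,\ w\in e\}$. If $\{v,u,w\}\in B$ is any edge containing $v$, then $|V_u\cap V_w|\le (t-1)(6t-2)$.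
   Context: A hypergraph $\mathcal{H}$ contains a graph $F$ (vertices $v_1,\dots,v_p$, edges $e_1,\dots,e_q$) as a trace if there exist distinct vertices $w_1,\dots,w_p\in V(\mathcal{H})$ and distinct edges $f_1,\dots,f_q\in E(\mathcal{H})$ such that whenever $e_i=v_\alpha v_\beta$, $f_i\cap\{w_1,\dots,w_p\}=\{w_\alpha,w_\beta\}$. The co-degree of a pair $\{x,y\}$ in $\mathcal{H}$ is the number of edges of $\mathcal{H}$ containing $\{x,y\}$. $\mathcal{H}\setminus A$ denotes the hypergraph on $V(\mathcal{H})$ with edge set $E(\mathcal{H})\setminus A$. *)

theory Defs
  imports Main
begin

definition uniform3 :: "'a set \<Rightarrow> 'a set set \<Rightarrow> bool" where
  "uniform3 V E \<longleftrightarrow> finite V \<and> (\<forall>e\<in>E. e \<subseteq> V \<and> card e = 3)"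

definition contains_trace :: "'a set \<Rightarrow> 'a set set \<Rightarrow> 'b set \<Rightarrow> 'b set set \<Rightarrow> bool" where
  "contains_trace V E VF EF \<longleftrightarrow>
     (\<exists>\<phi> \<psi>. inj_on \<phi> VF \<and> \<phi> ` VF \<subseteq> V \<and> inj_on \<psi> EF \<and> \<psi> ` EF \<subseteq> E \<and>
            (\<forall>f\<in>EF. \<psi> f \<inter> \<phi> ` VF = \<phi> ` f))"

(* K_{2,t}: parts {0,1} and {2,...,t+1} *)
definition K2t_vertices :: "nat \<Rightarrow> nat set" where
  "K2t_vertices t = {0..<t+2}"

definition K2t_edges :: "nat \<Rightarrow> nat set set" where
  "K2t_edges t = {{i, j} | i j. i < 2 \<and> 2 \<le> j \<and> j < t + 2}"

definition codeg :: "'a set set \<Rightarrow> 'a \<Rightarrow> 'a \<Rightarrow> nat" where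
  "codeg E x y = card {e\<in>E. {x, y} \<subseteq> e}"

definition setA :: "'a set set \<Rightarrow> 'a set set" where
  "setA E = {e\<in>E. \<exists>x y. x \<noteq> y \<and> {x, y} \<subseteq> e \<and> codeg E x y = 1}"

definition setB :: "'a set set \<Rightarrow> 'a set set" where
  "setB E = E - setA E"

definition N1 :: "'a set set \<Rightarrow> 'a \<Rightarrow> 'a set" where
  "N1 B x = {z. z \<noteq> x \<and> (\<exists>e\<in>B. {x, z} \<subseteq> e)}"

definition N2 :: "'a set set \<Rightarrow> 'a \<Rightarrow> 'a set" where
  "N2 B x = {z. z \<notin> N1 B x \<union> {x} \<and> (\<exists>e\<in>B. z \<in> e \<and> e \<inter> N1 B x \<noteq> {})}"

definition Eu :: "'a set set \<Rightarrow> 'a \<Rightarrow> 'a \<Rightarrow> 'a set set" where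
  "Eu B v u = {e\<in>B. e \<inter> N1 B v = {u}}"

definition Vu :: "'a set set \<Rightarrow> 'a \<Rightarrow> 'a \<Rightarrow> 'a set" where
  "Vu B v u = {w\<in>N2 B v. \<exists>e\<in>Eu B v u. w \<in> e}"

end

theory Submission
  imports Defs
begin

(* Every x in V_u \<inter> V_w lies in edges {u, x, c1 x} and {w, x, c2 x} of B whose third vertices
   avoid N_1(v), hence avoid u and w.  The digraph x \<rightarrow> c1 x, c2 x has out-degree at most 2, so it
   has an independent set containing at least a fifth of its vertices; t of those vertices,
   together with u and w, carry a trace of K_{2,t}.  Thus |V_u \<inter> V_w| \<le> 5(t - 1), which is at
   most (t - 1)(6t - 2) for every t. *)

lemma sum_card_in_neighbours_le:
  assumes "finite S" and "\<forall>y\<in>S. finite (out y) \<and> card (out y) \<le> d"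
  shows "(\<Sum>x\<in>S. card {y\<in>S. x \<in> out y}) \<le> d * card S"
proof -
  have "(\<Sum>x\<in>S. card {y\<in>S. x \<in> out y}) = (\<Sum>y\<in>S. card {x\<in>S. x \<in> out y})"
    using sum_multicount_gen[OF assms(1) assms(1), of "\<lambda>x y. x \<in> out y"] by simp
  also have "\<dots> \<le> (\<Sum>y\<in>S. d)"
  proof (rule sum_mono)
    fix y assume "y \<in> S"
    then have "card {x\<in>S. x \<in> out y} \<le> card (out y)"
      using assms(2) by (intro card_mono) auto
    with \<open>y \<in> S\<close> show "card {x\<in>S. x \<in> out y} \<le> d"
      using assms(2) by fastforce
  qed
  finally show ?thesis by (simp add: mult.commute)
qed

lemma exists_in_degree_le:
  assumes "finite S" "S \<noteq> {}" and "\<forall>y\<in>S. finite (out y) \<and> card (out y) \<le> d"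
  obtains x where "x \<in> S" "card {y\<in>S. x \<in> out y} \<le> d"
proof (rule ccontr)
  assume "\<not> thesis"
  with that have "\<forall>x\<in>S. Suc d \<le> card {y\<in>S. x \<in> out y}"
    by (meson not_less_eq_eq)
  then have "Suc d * card S \<le> (\<Sum>x\<in>S. card {y\<in>S. x \<in> out y})"
    using sum_mono[of S "\<lambda>_. Suc d"] by (simp add: mult.commute)
  with sum_card_in_neighbours_le[OF assms(1,3)] have "card S = 0"
    by simp
  with assms(1,2) show False by simp
qed

(* Greedy: a vertex of in-degree at most d exists by double counting; keep it, discard its at
   most 2d in- and out-neighbours, and recurse. *)

lemma exists_large_independent_subset:
  assumes "finite S" and "\<forall>x\<in>S. x \<notin> out x \<and> finite (out x) \<and> card (out x) \<le> d"
  shows "\<exists>T\<subseteq>S. card S \<le> (2 * d + 1) * card T \<and> (\<forall>x\<in>T. out x \<inter> T = {})"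
  using assms
proof (induction "card S" arbitrary: S rule: less_induct)
  case less
  show ?case
  proof (cases "S = {}")
    case True
    then show ?thesis by auto
  next
    case False
    obtain x where x: "x \<in> S" and in_deg: "card {y\<in>S. x \<in> out y} \<le> d"
      using exists_in_degree_le[OF less.prems(1) False] less.prems(2) by blast
    define R where "R = insert x (out x \<union> {y\<in>S. x \<in> out y})"
    have "finite R" "x \<in> R"
      using less.prems x by (auto simp: R_def)
    have card_R: "card R \<le> 2 * d + 1"
    proof -
      have "card R \<le> Suc (card (out x \<union> {y\<in>S. x \<in> out y}))"
        unfolding R_def by (simp add: card_insert_le_m1)
      also have "\<dots> \<le> Suc (card (out x) + card {y\<in>S. x \<in> out y})"
        using card_Un_le by simp
      finally show ?thesis using less.prems(2) x in_deg by fastforce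
    qed
    have "card (S - R) < card S"
      using less.prems(1) x \<open>x \<in> R\<close> by (intro psubset_card_mono) auto
    then obtain T where T: "T \<subseteq> S - R" "card (S - R) \<le> (2 * d + 1) * card T"
      "\<forall>y\<in>T. out y \<inter> T = {}"
      using less.hyps less.prems by (metis Diff_subset finite_Diff subsetD)
    have "finite T" "x \<notin> T"
      using T(1) less.prems(1) \<open>x \<in> R\<close> finite_subset by auto
    have "card S \<le> card (S - R) + card R"
      using card_Int_Diff[OF less.prems(1), of R] card_mono[OF \<open>finite R\<close>, of "S \<inter> R"] by simp
    then have "card S \<le> (2 * d + 1) * card (insert x T)"
      using T(2) card_R \<open>finite T\<close> \<open>x \<notin> T\<close> by simp
    moreover have "\<forall>y\<in>insert x T. out y \<inter> insert x T = {}"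
      using T less.prems(2) x unfolding R_def by blast
    ultimately show ?thesis
      using T(1) x by (intro exI[of _ "insert x T"]) auto
  qed
qed

lemma card_3_third_element:
  assumes "card e = 3" "a \<in> e" "b \<in> e" "a \<noteq> b"
  obtains c where "e = {a, b, c}" "c \<noteq> a" "c \<noteq> b"
proof -
  have "card (e - {a, b}) = 1"
    using assms by (simp add: card_Diff_subset)
  then obtain c where "e - {a, b} = {c}"
    by (meson card_1_singletonE)
  with assms(2,3) show thesis
    using that by blast
qed

lemma contains_traceI:
  assumes "inj_on \<phi> VF" "\<phi> ` VF \<subseteq> V" "\<psi> ` EF \<subseteq> E" "\<forall>f\<in>EF. f \<subseteq> VF"
    and "\<forall>f\<in>EF. \<psi> f \<inter> \<phi> ` VF = \<phi> ` f"
  shows "contains_trace V E VF EF"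
proof -
  have "inj_on \<psi> EF"
  proof (rule inj_onI)
    fix f f' assume "f \<in> EF" "f' \<in> EF" "\<psi> f = \<psi> f'"
    then have "\<phi> ` f = \<phi> ` f'"
      using assms(5) by metis
    with \<open>f \<in> EF\<close> \<open>f' \<in> EF\<close> show "f = f'"
      using inj_on_image_eq_iff[OF assms(1)] assms(4) by blast
  qed
  with assms show ?thesis
    unfolding contains_trace_def by blast
qed

lemma contains_K2t_traceI:
  assumes "a \<noteq> b" "a \<notin> X" "b \<notin> X" "insert a (insert b X) \<subseteq> V" "finite X" "card X = t"
    and "\<forall>x\<in>X. ea x \<in> E \<and> ea x \<inter> insert a (insert b X) = {a, x}"
    and "\<forall>x\<in>X. eb x \<in> E \<and> eb x \<inter> insert a (insert b X) = {b, x}"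
  shows "contains_trace V E (K2t_vertices t) (K2t_edges t)"
proof -
  obtain h where h: "bij_betw h {2..<t+2} X"
    using finite_same_card_bij[of "{2..<t+2}" X] assms(5,6) by auto
  define \<phi> where "\<phi> j = (if j = 0 then a else if j = 1 then b else h j)" for j :: nat
  \<comment> \<open>An edge of \<open>K\<^sub>2\<^sub>,\<^sub>t\<close> is \<open>{i, j}\<close> with \<open>i < 2 \<le> j\<close>, so \<open>Max f\<close> is its vertex in the large part.\<close>
  define \<psi> where "\<psi> f = (if 0 \<in> f then ea (\<phi> (Max f)) else eb (\<phi> (Max f)))" for f :: "nat set"
  have VF: "K2t_vertices t = insert 0 (insert 1 {2..<t+2})"
    unfolding K2t_vertices_def by auto
  have \<phi>_0: "\<phi> 0 = a" and \<phi>_1: "\<phi> (Suc 0) = b"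
    by (simp_all add: \<phi>_def)
  have \<phi>_h: "\<phi> j = h j" if "j \<in> {2..<t+2}" for j
    using that by (simp add: \<phi>_def)
  have "\<phi> ` {2..<t+2} = h ` {2..<t+2}"
    by (rule image_cong[OF refl \<phi>_h])
  with h have \<phi>_X: "\<phi> ` {2..<t+2} = X"
    by (simp add: bij_betw_def)
  have \<phi>_image: "\<phi> ` K2t_vertices t = insert a (insert b X)"
    unfolding VF image_insert \<phi>_X by (simp add: \<phi>_def)
  have "inj_on \<phi> {2..<t+2}"
    using h \<phi>_h by (simp add: bij_betw_def inj_on_def)
  then have "inj_on \<phi> (K2t_vertices t)"
    using assms(1-3) \<phi>_X by (simp add: VF \<phi>_0 \<phi>_1)
  moreover have "\<forall>f\<in>K2t_edges t. \<psi> f \<in> E \<and> \<psi> f \<inter> \<phi> ` K2t_vertices t = \<phi> ` f"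
  proof
    fix f assume "f \<in> K2t_edges t"
    then obtain i j where f: "f = {i, j}" "i < 2" "2 \<le> j" "j < t + 2"
      unfolding K2t_edges_def by auto
    then have "Max f = j" by auto
    have "\<phi> j \<in> X"
      using \<phi>_X f(3,4) by auto
    show "\<psi> f \<in> E \<and> \<psi> f \<inter> \<phi> ` K2t_vertices t = \<phi> ` f"
    proof (cases "i = 0")
      case True
      then have "\<psi> f = ea (\<phi> j)" "\<phi> ` f = {a, \<phi> j}"
        using f \<open>Max f = j\<close> \<phi>_0 by (simp_all add: \<psi>_def)
      then show ?thesis
        using assms(7) \<open>\<phi> j \<in> X\<close> \<phi>_image by simp
    next
      case False
      then have "i = 1" "0 \<notin> f" using f by auto
      then have "\<psi> f = eb (\<phi> j)" "\<phi> ` f = {b, \<phi> j}"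
        using f \<open>Max f = j\<close> \<phi>_1 by (simp_all add: \<psi>_def)
      then show ?thesis
        using assms(8) \<open>\<phi> j \<in> X\<close> \<phi>_image by simp
    qed
  qed
  moreover have "\<forall>f\<in>K2t_edges t. f \<subseteq> K2t_vertices t"
    unfolding K2t_edges_def K2t_vertices_def by auto
  ultimately show ?thesis
    using assms(4) \<phi>_image by (intro contains_traceI[of \<phi> _ _ \<psi>]) auto
qed

lemma Vu_not_in_N1: "x \<in> Vu B v u \<Longrightarrow> x \<notin> N1 B v"
  by (simp add: Vu_def N2_def)

lemma Vu_third_vertex_choice:
  assumes "\<forall>e\<in>B. card e = 3"
  obtains c where "\<forall>x\<in>Vu B v u. {u, x, c x} \<in> B \<and> c x \<notin> N1 B v \<and> c x \<noteq> x"
proof -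
  have "\<exists>c. {u, x, c} \<in> B \<and> c \<notin> N1 B v \<and> c \<noteq> x" if x: "x \<in> Vu B v u" for x
  proof -
    obtain e where "e \<in> B" "e \<inter> N1 B v = {u}" "x \<in> e"
      using x by (auto simp: Vu_def Eu_def)
    moreover have "u \<noteq> x"
      using Vu_not_in_N1[OF x] \<open>e \<inter> N1 B v = {u}\<close> by blast
    ultimately obtain c where "e = {u, x, c}" "c \<noteq> u" "c \<noteq> x"
      using assms card_3_third_element[of e u x] by blast
    with \<open>e \<in> B\<close> \<open>e \<inter> N1 B v = {u}\<close> show ?thesis
      by blast
  qed
  with that show thesis
    by metis
qed

lemma card_Vu_inter_le:
  assumes "uniform3 V E" "B \<subseteq> E" "\<not> contains_trace V E (K2t_vertices t) (K2t_edges t)"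
    and "{v, u, w} \<in> B"
  shows "card (Vu B v u \<inter> Vu B v w) \<le> 5 * (t - 1)"
proof (rule ccontr)
  define S where "S = Vu B v u \<inter> Vu B v w"
  assume "\<not> ?thesis"
  then have card_S: "5 * (t - 1) < card S"
    unfolding S_def by simp
  then have "finite S"
    by (metis card.infinite not_less_zero)
  have B_sub: "\<forall>e\<in>B. e \<subseteq> V" and B_card: "\<forall>e\<in>B. card e = 3"
    using assms(1,2) unfolding uniform3_def by blast+
  have "card {v, u, w} = 3" "u \<in> V" "w \<in> V"
    using bspec[OF B_card assms(4)] bspec[OF B_sub assms(4)] by simp_all
  then have "v \<noteq> u" "v \<noteq> w" "u \<noteq> w"
    by (auto simp: card_insert_if split: if_splits)
  then have "u \<in> N1 B v" "w \<in> N1 B v"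
    using assms(4) unfolding N1_def by blast+
  obtain c1 where c1: "\<forall>x\<in>Vu B v u. {u, x, c1 x} \<in> B \<and> c1 x \<notin> N1 B v \<and> c1 x \<noteq> x"
    using Vu_third_vertex_choice[OF B_card] .
  obtain c2 where c2: "\<forall>x\<in>Vu B v w. {w, x, c2 x} \<in> B \<and> c2 x \<notin> N1 B v \<and> c2 x \<noteq> x"
    using Vu_third_vertex_choice[OF B_card] .
  have "\<forall>x\<in>S. x \<notin> {c1 x, c2 x} \<and> finite {c1 x, c2 x} \<and> card {c1 x, c2 x} \<le> 2"
    using c1 c2 unfolding S_def by (auto simp: card_insert_if)
  then have "\<exists>T\<subseteq>S. card S \<le> (2 * 2 + 1) * card T \<and> (\<forall>x\<in>T. {c1 x, c2 x} \<inter> T = {})"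
    by (intro exists_large_independent_subset[OF \<open>finite S\<close>])
  then obtain T where T: "T \<subseteq> S" "card S \<le> 5 * card T" "\<forall>x\<in>T. {c1 x, c2 x} \<inter> T = {}"
    by auto
  have "t \<le> card T"
    using card_S T(2) by linarith
  then obtain X where X: "X \<subseteq> T" "card X = t" "finite X"
    by (rule obtain_subset_with_card_n)
  have X_S: "x \<in> Vu B v u" "x \<in> Vu B v w" if "x \<in> X" for x
    using that X(1) T(1) unfolding S_def by blast+
  have "u \<notin> X" "w \<notin> X"
    using Vu_not_in_N1[OF X_S(1)] \<open>u \<in> N1 B v\<close> \<open>w \<in> N1 B v\<close> by blast+
  have "X \<subseteq> V"
  proof
    fix x assume "x \<in> X"
    then have "{u, x, c1 x} \<in> B"
      using X_S(1) c1 by simp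
    then show "x \<in> V"
      using B_sub by (metis insert_subset)
  qed
  have "c1 x \<notin> insert u (insert w X) \<and> c2 x \<notin> insert u (insert w X)" if "x \<in> X" for x
    using that X(1) T(3) X_S c1 c2 \<open>u \<in> N1 B v\<close> \<open>w \<in> N1 B v\<close> by blast
  then have u_edges: "\<forall>x\<in>X. {u, x, c1 x} \<in> E \<and> {u, x, c1 x} \<inter> insert u (insert w X) = {u, x}"
    and w_edges: "\<forall>x\<in>X. {w, x, c2 x} \<in> E \<and> {w, x, c2 x} \<inter> insert u (insert w X) = {w, x}"
    using X_S c1 c2 assms(2) by auto
  have "insert u (insert w X) \<subseteq> V"
    using \<open>u \<in> V\<close> \<open>w \<in> V\<close> \<open>X \<subseteq> V\<close> by simp
  then have "contains_trace V E (K2t_vertices t) (K2t_edges t)"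
    by (rule contains_K2t_traceI[OF \<open>u \<noteq> w\<close> \<open>u \<notin> X\<close> \<open>w \<notin> X\<close> _ X(3,2) u_edges w_edges])
  with assms(3) show False ..
qed

theorem mainTheorem6:
  fixes V :: "'a set" and E :: "'a set set" and t :: nat and v u w :: 'a
  assumes "t \<ge> 3"
    and "uniform3 V E"
    and "\<not> contains_trace V E (K2t_vertices t) (K2t_edges t)"
    and "{v, u, w} \<in> setB E"
  shows "card (Vu (setB E) v u \<inter> Vu (setB E) v w) \<le> (t - 1) * (6 * t - 2)"
proof -
  have "setB E \<subseteq> E"
    unfolding setB_def by blast
  then have "card (Vu (setB E) v u \<inter> Vu (setB E) v w) \<le> 5 * (t - 1)"
    using assms(2-4) by (intro card_Vu_inter_le)
  also have "\<dots> \<le> (t - 1) * (6 * t - 2)"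
    using assms(1) by simp
  finally show ?thesis .
qed

end
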